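(* Let $K$ be a number field and let $\mathcal{R}_K$ be a system of representatives of the ideal class group of $K$ such that each $\mathfrak{g}\in\mathcal{R}_K$ is an integral ideal of $\mathcal{O}_K$ whose absolute norm is minimal among the integral ideals in its ideal class. Then every element of $\mathcal{R}_K$ is inseverable.
   Context: A nonzero ideal $\mathfrak{a}\subseteq\mathcal{O}_K$ is inseverable if the only principal ideal dividing (containing) $\mathfrak{a}$ is $\mathcal{O}_K$. *)

theory Defs
  imports "HOL-Computational_Algebra.Polynomial"
begin

text \<open>A number field is modelled as a subfield K of the complex numbers
  that is finite-dimensional over the rationals (every subfield of C contains Q).\<close>

definition subfield_of_complex :: "complex set \<Rightarrow> bool" where
  "subfield_of_complex K \<longleftrightarrow> 0 \<in> K \<and> 1 \<in> K \<and>
     (\<forall>x\<in>K. \<forall>y\<in>K. x + y \<in> K \<and> x - y \<in> K \<and> x * y \<in> K) \<and>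
     (\<forall>x\<in>K. x \<noteq> 0 \<longrightarrow> inverse x \<in> K)"

definition number_field :: "complex set \<Rightarrow> bool" where
  "number_field K \<longleftrightarrow> subfield_of_complex K \<and>
     (\<exists>bs :: complex list. set bs \<subseteq> K \<and>
        K \<subseteq> {(\<Sum>i<length bs. of_rat (q i) * bs ! i) | q. True})"

definition algebraic_integer :: "complex \<Rightarrow> bool" where
  "algebraic_integer x \<longleftrightarrow>
     (\<exists>p :: int poly. lead_coeff p = 1 \<and> poly (map_poly of_int p) x = 0)"

definition ring_of_integers :: "complex set \<Rightarrow> complex set" where
  "ring_of_integers K = {x \<in> K. algebraic_integer x}"

definition nonzero_integral_ideal :: "complex set \<Rightarrow> complex set \<Rightarrow> bool" where
  "nonzero_integral_ideal K I \<longleftrightarrow> I \<subseteq> ring_of_integers K \<and> 0 \<in> I \<and> I \<noteq> {0} \<and>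
     (\<forall>x\<in>I. \<forall>y\<in>I. x + y \<in> I) \<and>
     (\<forall>r\<in>ring_of_integers K. \<forall>x\<in>I. r * x \<in> I)"

definition principal_ideal :: "complex set \<Rightarrow> complex \<Rightarrow> complex set" where
  "principal_ideal K a = {a * x | x. x \<in> ring_of_integers K}"

definition abs_norm :: "complex set \<Rightarrow> complex set \<Rightarrow> nat" where
  "abs_norm K I = card {(+) x ` I | x. x \<in> ring_of_integers K}"

definition same_ideal_class :: "complex set \<Rightarrow> complex set \<Rightarrow> complex set \<Rightarrow> bool" where
  "same_ideal_class K I J \<longleftrightarrow> (\<exists>x\<in>K. x \<noteq> 0 \<and> I = (*) x ` J)"

definition class_group_representatives :: "complex set \<Rightarrow> complex set set \<Rightarrow> bool" where
  "class_group_representatives K R \<longleftrightarrow>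
     (\<forall>g\<in>R. nonzero_integral_ideal K g) \<and>
     (\<forall>I. nonzero_integral_ideal K I \<longrightarrow> (\<exists>!g. g \<in> R \<and> same_ideal_class K I g))"

definition inseverable :: "complex set \<Rightarrow> complex set \<Rightarrow> bool" where
  "inseverable K a \<longleftrightarrow> nonzero_integral_ideal K a \<and>
     (\<forall>\<alpha>\<in>ring_of_integers K. a \<subseteq> principal_ideal K \<alpha> \<longrightarrow>
        principal_ideal K \<alpha> = ring_of_integers K)"

end

(* Suppose a representative g of minimal norm lies in a principal ideal (alpha) different from
   O_K. Then J = alpha^-1 g is an integral ideal in the class of g, and multiplication by alpha maps
   O_K/J injectively into O_K/g with image inside (alpha)/g. Some coset of g lies outside (alpha),
   so N(J) < N(g), contradicting minimality.

   The counting needs O_K/g to be finite. The ideal g contains a positive integer m, and O_K/mO_K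
   has at most m^n elements because O_K is an additive subgroup of an n-dimensional Q-vector space:
   splitting off one rational coordinate at a time reduces this to subgroups of Q, whose finitely
   generated subgroups are cyclic. No integral basis of O_K is needed. That O_K is a ring at all
   comes from the determinant trick. *)

theory Submission
  imports Defs "Jordan_Normal_Form.Char_Poly"
begin

definition add_subgroup :: "'a :: ab_group_add set \<Rightarrow> bool" where
  "add_subgroup G \<longleftrightarrow> 0 \<in> G \<and> (\<forall>x\<in>G. \<forall>y\<in>G. x - y \<in> G)"

lemma add_subgroup_zero: "add_subgroup G \<Longrightarrow> 0 \<in> G"
  unfolding add_subgroup_def by blast

lemma add_subgroup_diff: "add_subgroup G \<Longrightarrow> x \<in> G \<Longrightarrow> y \<in> G \<Longrightarrow> x - y \<in> G"
  unfolding add_subgroup_def by blast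

lemma add_subgroup_uminus: "add_subgroup G \<Longrightarrow> x \<in> G \<Longrightarrow> - x \<in> G"
  using add_subgroup_diff[of G 0 x] add_subgroup_zero[of G] by simp

lemma add_subgroup_add: "add_subgroup G \<Longrightarrow> x \<in> G \<Longrightarrow> y \<in> G \<Longrightarrow> x + y \<in> G"
  using add_subgroup_diff[of G x "- y"] add_subgroup_uminus[of G y] by simp

lemma add_subgroup_sum:
  "add_subgroup G \<Longrightarrow> (\<And>i. i \<in> I \<Longrightarrow> f i \<in> G) \<Longrightarrow> sum f I \<in> G"
  by (induction I rule: infinite_finite_induct) (auto intro: add_subgroup_add add_subgroup_zero)

lemma add_subgroup_of_int_mult:
  fixes x :: "'a :: ring_1"
  assumes G: "add_subgroup G" and x: "x \<in> G"
  shows "of_int k * x \<in> G"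
proof -
  have nat: "of_nat n * x \<in> G" for n
    by (induction n) (auto simp: distrib_right intro: add_subgroup_add add_subgroup_zero G x)
  have "of_int k * x = of_nat (nat k) * x - of_nat (nat (- k)) * x"
    by (cases "k \<ge> 0") (simp_all add: of_nat_nat)
  then show ?thesis using add_subgroup_diff[OF G nat nat] by simp
qed

lemma add_subgroup_image:
  fixes P :: "'a :: ab_group_add \<Rightarrow> 'b :: ab_group_add"
  assumes G: "add_subgroup G" and P: "\<And>x y. x \<in> G \<Longrightarrow> y \<in> G \<Longrightarrow> P (x - y) = P x - P y"
  shows "add_subgroup (P ` G)"
  unfolding add_subgroup_def
proof (intro conjI ballI)
  show "0 \<in> P ` G"
    using P[of 0 0] add_subgroup_zero[OF G] by force
  fix u w assume "u \<in> P ` G" "w \<in> P ` G"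
  then obtain x y where "x \<in> G" "y \<in> G" "u = P x" "w = P y" by blast
  then show "u - w \<in> P ` G"
    using P add_subgroup_diff[OF G] by (metis image_eqI)
qed

lemma add_subgroup_kernel:
  fixes P :: "'a :: ab_group_add \<Rightarrow> 'b :: ab_group_add"
  assumes G: "add_subgroup G" and P: "\<And>x y. x \<in> G \<Longrightarrow> y \<in> G \<Longrightarrow> P (x - y) = P x - P y"
  shows "add_subgroup {x \<in> G. P x = 0}"
  unfolding add_subgroup_def using P add_subgroup_zero[OF G] add_subgroup_diff[OF G] by force

lemma additive_of_nat_mult:
  fixes x :: "'a :: ring_1" and P :: "'a \<Rightarrow> 'b :: ring_1"
  assumes G: "add_subgroup G" and P: "\<And>x y. x \<in> G \<Longrightarrow> y \<in> G \<Longrightarrow> P (x - y) = P x - P y"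
    and x: "x \<in> G"
  shows "P (of_nat n * x) = of_nat n * P x"
proof -
  have P0: "P 0 = 0" using P[OF x x] by simp
  have P_uminus: "P (- x) = - P x"
    using P[OF add_subgroup_zero[OF G] x] P0 by simp
  show ?thesis
  proof (induction n)
    case (Suc n)
    have "of_nat n * x \<in> G" using add_subgroup_of_int_mult[OF G x, of "int n"] by simp
    then have "P (of_nat n * x - - x) = P (of_nat n * x) + P x"
      using P[OF _ add_subgroup_uminus[OF G x]] P_uminus by simp
    then show ?case using Suc by (simp add: algebra_simps)
  qed (simp add: P0)
qed

lemma add_coset_eq_iff:
  assumes "add_subgroup H"
  shows "(+) x ` H = (+) y ` H \<longleftrightarrow> x - y \<in> H"
proof
  assume "(+) x ` H = (+) y ` H"
  then have "x + 0 \<in> (+) y ` H" using add_subgroup_zero[OF assms] by blast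
  then show "x - y \<in> H" by (auto simp: algebra_simps)
next
  assume d: "x - y \<in> H"
  have "x + h = y + ((x - y) + h)" "y + h = x + (h - (x - y))" for h by simp_all
  then show "(+) x ` H = (+) y ` H"
    using add_subgroup_add[OF assms d] add_subgroup_diff[OF assms _ d] by blast
qed

section \<open>Algebraic integers\<close>

inductive_set int_span :: "'a :: ab_group_add set \<Rightarrow> 'a set" for A where
  base: "a \<in> A \<Longrightarrow> a \<in> int_span A"
| zero: "0 \<in> int_span A"
| diff: "u \<in> int_span A \<Longrightarrow> w \<in> int_span A \<Longrightarrow> u - w \<in> int_span A"

lemma add_subgroup_int_span: "add_subgroup (int_span A)"
  unfolding add_subgroup_def by (blast intro: int_span.intros)

lemma int_span_mult:
  fixes u w :: "'a :: ring"
  assumes "u \<in> int_span A" "w \<in> int_span B"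
  shows "u * w \<in> int_span {a * b | a b. a \<in> A \<and> b \<in> B}"
  using assms(1)
proof (induction rule: int_span.induct)
  case (base a)
  from assms(2) show ?case
  proof (induction rule: int_span.induct)
    case (base b)
    then show ?case using \<open>a \<in> A\<close> by (blast intro: int_span.base)
  qed (simp_all add: right_diff_distrib int_span.zero int_span.diff)
qed (auto simp: left_diff_distrib intro: int_span.intros)

lemma int_span_set_coefficients:
  assumes "u \<in> int_span (set vs)"
  obtains c :: "nat \<Rightarrow> int" where "u = (\<Sum>j<length vs. of_int (c j) * vs ! j)"
  using assms
proof (induction arbitrary: thesis rule: int_span.induct)
  case (base a)
  then obtain k where k: "k < length vs" "a = vs ! k" by (auto simp: in_set_conv_nth)
  then have "a = (\<Sum>j<length vs. of_int (if j = k then 1 else 0) * vs ! j)"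
    by (simp add: if_distrib if_distribR sum.delta cong: if_cong)
  then show ?case by (rule base.prems)
next
  case zero
  show ?case by (rule zero.prems[of "\<lambda>_. 0"]) simp
next
  case (diff u w)
  obtain c1 c2 where "u = (\<Sum>j<length vs. of_int (c1 j) * vs ! j)"
    "w = (\<Sum>j<length vs. of_int (c2 j) * vs ! j)" using diff.IH by metis
  then show ?case
    by (intro diff.prems[of "\<lambda>j. c1 j - c2 j"]) (simp add: sum_subtractf left_diff_distrib)
qed

lemma algebraic_integer_iff_algebraic_int: "algebraic_integer x \<longleftrightarrow> algebraic_int x"
  unfolding algebraic_integer_def algebraic_int_altdef_ipoly by blast

lemma algebraic_int_eigenvalue_of_int_mat:
  fixes x :: "'a :: field_char_0"
  assumes A: "A \<in> carrier_mat n n" and v: "v \<in> carrier_vec n" "v \<noteq> 0\<^sub>v n"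
    and eigen: "map_mat of_int A *\<^sub>v v = x \<cdot>\<^sub>v v"
  shows "algebraic_int x"
proof -
  have A': "map_mat of_int A \<in> carrier_mat n n" using A by simp
  have "eigenvalue (map_mat of_int A) x"
    unfolding eigenvalue_def eigenvector_def using A v eigen by auto
  then have "poly (char_poly (map_mat of_int A)) x = 0"
    using eigenvalue_root_char_poly[OF A'] by blast
  then have "poly (map_poly of_int (char_poly A)) x = 0"
    using of_int_hom.char_poly_hom[OF A] by metis
  moreover have "lead_coeff (char_poly A) = 1" using degree_monic_char_poly[OF A] by simp
  ultimately show ?thesis unfolding algebraic_int_altdef_ipoly by blast
qed

text \<open>The determinant trick: \<open>x\<close> is an eigenvalue of the integer matrix of multiplication
  by \<open>x\<close> on a spanning list of \<open>A\<close>.\<close>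

lemma algebraic_int_if_int_span_stable:
  fixes x :: "'a :: field_char_0"
  assumes "finite A" "\<exists>a\<in>A. a \<noteq> 0" "\<And>a. a \<in> A \<Longrightarrow> x * a \<in> int_span A"
  shows "algebraic_int x"
proof -
  obtain vs where vs: "set vs = A" using finite_list[OF assms(1)] by blast
  let ?n = "length vs"
  have "\<forall>i<?n. \<exists>c :: nat \<Rightarrow> int. x * vs ! i = (\<Sum>j<?n. of_int (c j) * vs ! j)"
    using assms(3) vs by (metis int_span_set_coefficients nth_mem)
  then obtain C where C: "\<And>i. i < ?n \<Longrightarrow> x * vs ! i = (\<Sum>j<?n. of_int (C i j) * vs ! j)"
    by metis
  define v where "v = vec ?n (\<lambda>i. vs ! i)"
  show ?thesis
  proof (rule algebraic_int_eigenvalue_of_int_mat)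
    show "mat ?n ?n (\<lambda>(i, j). C i j) \<in> carrier_mat ?n ?n" "v \<in> carrier_vec ?n"
      unfolding v_def by auto
    show "v \<noteq> 0\<^sub>v ?n"
      using assms(2) vs unfolding v_def by (auto simp: in_set_conv_nth vec_eq_iff)
    show "map_mat of_int (mat ?n ?n (\<lambda>(i, j). C i j)) *\<^sub>v v = x \<cdot>\<^sub>v v"
      using C unfolding v_def
      by (auto simp: vec_eq_iff mult_mat_vec_def scalar_prod_def lessThan_atLeast0 intro!: sum.cong)
  qed
qed

lemma algebraic_int_powers_int_span:
  fixes x :: "'a :: field_char_0"
  assumes "algebraic_int x"
  obtains d where "d > 0" "\<And>k. x ^ k \<in> int_span {x ^ i | i. i < d}"
proof -
  obtain p :: "int poly" where p: "poly (map_poly of_int p) x = 0" "lead_coeff p = 1"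
    using assms unfolding algebraic_int_altdef_ipoly by blast
  define d where "d = degree p"
  have "0 = (\<Sum>i\<le>d. of_int (coeff p i) * x ^ i)"
    using p(1) by (simp add: poly_altdef degree_map_poly coeff_map_poly d_def)
  also have "\<dots> = (\<Sum>i<d. of_int (coeff p i) * x ^ i) + x ^ d"
    using p(2) by (simp add: lessThan_Suc_atMost[symmetric] d_def)
  finally have xd: "x ^ d = - (\<Sum>i<d. of_int (coeff p i) * x ^ i)"
    by (simp add: eq_neg_iff_add_eq_0 add.commute)
  then have "d > 0" by (intro Nat.gr0I) simp
  moreover have "x ^ k \<in> int_span {x ^ i | i. i < d}" for k
  proof (induction k rule: less_induct)
    case (less k)
    show ?case
    proof (cases "k < d")
      case True then show ?thesis by (auto intro: int_span.base)
    next
      case False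
      have "x ^ k = x ^ (k - d) * x ^ d" using False by (simp flip: power_add)
      also have "\<dots> = - (\<Sum>i<d. of_int (coeff p i) * x ^ (k - d + i))"
        unfolding xd by (simp add: sum_distrib_left power_add mult.left_commute)
      also have "\<dots> \<in> int_span {x ^ i | i. i < d}"
        using False \<open>d > 0\<close> add_subgroup_int_span
        by (intro add_subgroup_uminus add_subgroup_sum add_subgroup_of_int_mult less) auto
      finally show ?thesis .
    qed
  qed
  ultimately show ?thesis using that by blast
qed

lemma algebraic_int_monomials_int_span:
  fixes x y :: "'a :: field_char_0"
  assumes "algebraic_int x" "algebraic_int y"
  obtains A where "finite A" "1 \<in> A" "\<And>a. a \<in> A \<Longrightarrow> \<exists>i j. a = x ^ i * y ^ j"
    "\<And>i j. x ^ i * y ^ j \<in> int_span A"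
proof -
  obtain d where d: "d > 0" "\<And>k. x ^ k \<in> int_span {x ^ i | i. i < d}"
    using algebraic_int_powers_int_span[OF assms(1)] by blast
  obtain e where e: "e > 0" "\<And>k. y ^ k \<in> int_span {y ^ i | i. i < e}"
    using algebraic_int_powers_int_span[OF assms(2)] by blast
  define A where "A = {a * b | a b. a \<in> {x ^ i | i. i < d} \<and> b \<in> {y ^ i | i. i < e}}"
  show ?thesis
  proof (rule that)
    have "A = (\<lambda>(i, j). x ^ i * y ^ j) ` ({..<d} \<times> {..<e})" unfolding A_def by auto
    then show "finite A" by simp
    have "x ^ 0 * y ^ 0 \<in> A" unfolding A_def using d e by blast
    then show "1 \<in> A" by simp
    show "\<exists>i j. a = x ^ i * y ^ j" if "a \<in> A" for a using that unfolding A_def by blast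
    show "x ^ i * y ^ j \<in> int_span A" for i j unfolding A_def by (rule int_span_mult[OF d(2) e(2)])
  qed
qed

lemma algebraic_int_add:
  fixes x y :: "'a :: field_char_0"
  assumes "algebraic_int x" "algebraic_int y"
  shows "algebraic_int (x + y)"
proof -
  obtain A where A: "finite A" "1 \<in> A" "\<And>a. a \<in> A \<Longrightarrow> \<exists>i j. a = x ^ i * y ^ j"
    "\<And>i j. x ^ i * y ^ j \<in> int_span A"
    using algebraic_int_monomials_int_span[OF assms] by blast
  show ?thesis
  proof (rule algebraic_int_if_int_span_stable[OF A(1)])
    fix a assume "a \<in> A"
    then obtain i j where a: "a = x ^ i * y ^ j" using A(3) by blast
    have "(x + y) * a = x ^ Suc i * y ^ j + x ^ i * y ^ Suc j"
      unfolding a by (simp add: algebra_simps)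
    then show "(x + y) * a \<in> int_span A"
      by (simp only:) (rule add_subgroup_add[OF add_subgroup_int_span A(4) A(4)])
  qed (intro bexI[OF _ A(2)], simp)
qed

lemma algebraic_int_mult:
  fixes x y :: "'a :: field_char_0"
  assumes "algebraic_int x" "algebraic_int y"
  shows "algebraic_int (x * y)"
proof -
  obtain A where A: "finite A" "1 \<in> A" "\<And>a. a \<in> A \<Longrightarrow> \<exists>i j. a = x ^ i * y ^ j"
    "\<And>i j. x ^ i * y ^ j \<in> int_span A"
    using algebraic_int_monomials_int_span[OF assms] by blast
  show ?thesis
  proof (rule algebraic_int_if_int_span_stable[OF A(1)])
    fix a assume "a \<in> A"
    then obtain i j where a: "a = x ^ i * y ^ j" using A(3) by blast
    have "(x * y) * a = x ^ Suc i * y ^ Suc j"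
      unfolding a by (simp add: algebra_simps)
    then show "(x * y) * a \<in> int_span A" by (simp only: A(4))
  qed (intro bexI[OF _ A(2)], simp)
qed

lemma algebraic_int_monic_poly_nonzero_const:
  fixes a :: "'a :: field_char_0"
  assumes "algebraic_int a" "a \<noteq> 0"
  obtains p :: "int poly"
  where "lead_coeff p = 1" "poly (map_poly of_int p) a = 0" "coeff p 0 \<noteq> 0"
proof -
  obtain p :: "int poly" where "lead_coeff p = 1" "poly (map_poly of_int p) a = 0"
    using assms(1) unfolding algebraic_int_altdef_ipoly by blast
  then have "\<exists>p :: int poly. lead_coeff p = 1 \<and> poly (map_poly of_int p) a = 0 \<and> coeff p 0 \<noteq> 0"
  proof (induction p)
    case (pCons c q)
    show ?case
    proof (cases "c = 0")
      case True
      then have "q \<noteq> 0" using pCons by auto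
      then have "lead_coeff q = 1" "poly (map_poly of_int q) a = 0"
        using pCons.prems True assms(2) by (simp_all add: map_poly_pCons)
      then show ?thesis by (rule pCons.IH)
    next
      case False
      then show ?thesis using pCons.prems by (metis coeff_pCons_0)
    qed
  qed simp
  then show ?thesis using that by blast
qed

section \<open>Index bounds for subgroups of finite-dimensional \<open>\<rat>\<close>-spans\<close>

text \<open>\<open>[G : H] \<le> N\<close>, stated without forming the quotient group.\<close>

definition index_at_most :: "'a :: ab_group_add set \<Rightarrow> 'a set \<Rightarrow> nat \<Rightarrow> bool" where
  "index_at_most G H N \<longleftrightarrow>
     (\<forall>S\<subseteq>G. finite S \<longrightarrow> (\<forall>x\<in>S. \<forall>y\<in>S. x - y \<in> H \<longrightarrow> x = y) \<longrightarrow> card S \<le> N)"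

lemma index_at_most_mono:
  "index_at_most G H N \<Longrightarrow> H \<subseteq> H' \<Longrightarrow> N \<le> N' \<Longrightarrow> index_at_most G H' N'"
  unfolding index_at_most_def by (meson order_trans subsetD)

lemma index_at_most_card_le:
  assumes index: "index_at_most G H N" and "0 \<in> H" "finite S" "f ` S \<subseteq> G"
    and incongruent: "\<And>x y. x \<in> S \<Longrightarrow> y \<in> S \<Longrightarrow> f x - f y \<in> H \<Longrightarrow> x = y"
  shows "card S \<le> N"
proof -
  have "inj_on f S"
  proof (rule inj_onI)
    fix x y assume "x \<in> S" "y \<in> S" "f x = f y"
    then show "x = y" using \<open>0 \<in> H\<close> by (intro incongruent) simp_all
  qed
  then have "card S = card (f ` S)" by (simp add: card_image)
  also have "\<dots> \<le> N"
  proof (rule index[unfolded index_at_most_def, rule_format])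
    show "f ` S \<subseteq> G" "finite (f ` S)" using assms(3,4) by simp_all
    fix u v assume "u \<in> f ` S" "v \<in> f ` S" "u - v \<in> H"
    then obtain x y where "x \<in> S" "y \<in> S" "u = f x" "v = f y" by blast
    moreover from this \<open>u - v \<in> H\<close> have "x = y" by (intro incongruent) simp_all
    ultimately show "u = v" by simp
  qed
  finally show ?thesis .
qed

lemma finite_cosets_if_index_at_most:
  assumes H: "add_subgroup H" and index: "index_at_most G H N"
  shows "finite {(+) x ` H | x. x \<in> G}"
proof (rule ccontr)
  assume "infinite {(+) x ` H | x. x \<in> G}"
  from infinite_arbitrarily_large[OF this, of "Suc N"]
  obtain C where C: "C \<subseteq> {(+) x ` H | x. x \<in> G}" "finite C" "card C = Suc N" by blast
  then have "\<forall>c\<in>C. \<exists>x\<in>G. c = (+) x ` H" by blast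
  then obtain rep where rep_mem: "\<And>c. c \<in> C \<Longrightarrow> rep c \<in> G"
    and rep_eq: "\<And>c. c \<in> C \<Longrightarrow> (+) (rep c) ` H = c" by metis
  have "card C \<le> N"
  proof (rule index_at_most_card_le[OF index add_subgroup_zero[OF H] C(2)])
    show "rep ` C \<subseteq> G" using rep_mem by blast
    fix c c' assume "c \<in> C" "c' \<in> C" "rep c - rep c' \<in> H"
    then have "(+) (rep c) ` H = (+) (rep c') ` H" by (simp only: add_coset_eq_iff[OF H])
    then show "c = c'" using rep_eq[OF \<open>c \<in> C\<close>] rep_eq[OF \<open>c' \<in> C\<close>] by metis
  qed
  then show False using C(3) by simp
qed

lemma add_subgroup_Rats_common_generator:
  fixes G :: "'a :: field_char_0 set"
  assumes G: "add_subgroup G" "G \<subseteq> \<rat>" and x: "x \<in> G" and w: "w \<in> G" "w \<noteq> 0"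
  obtains w' p q where "w' \<in> G" "x = of_int p * w'" "w = of_int q * w'"
proof -
  have "x / w \<in> \<rat>" using G(2) x w(1) by (auto intro: Rats_divide)
  then obtain p q where pq: "q > 0" "coprime p q" "x / w = of_int p / of_int q"
    by (rule Rats_cases')
  obtain s t where "s * p + t * q = gcd p q" using bezout_int by blast
  with pq(2) have st: "s * p + t * q = 1" by simp
  define w' where "w' = w / of_int q"
  have x_eq: "x = of_int p * w'" and w_eq: "w = of_int q * w'"
    using pq w(2) unfolding w'_def by (simp_all add: field_simps)
  have "of_int s * x + of_int t * w = of_int (s * p + t * q) * w'"
    unfolding x_eq w_eq by (simp add: algebra_simps)
  then have "w' = of_int s * x + of_int t * w" using st by simp
  then have "w' \<in> G"
    using add_subgroup_add[OF G(1) add_subgroup_of_int_mult[OF G(1) x] add_subgroup_of_int_mult[OF G(1) w(1)]]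
    by simp
  then show ?thesis using that x_eq w_eq by blast
qed

lemma add_subgroup_Rats_finite_subset_cyclic:
  fixes G :: "'a :: field_char_0 set"
  assumes G: "add_subgroup G" "G \<subseteq> \<rat>" and S: "finite S" "S \<subseteq> G"
  shows "\<exists>w\<in>G. \<forall>x\<in>S. \<exists>n::int. x = of_int n * w"
  using S
proof (induction S rule: finite_induct)
  case empty
  then show ?case using add_subgroup_zero[OF G(1)] by blast
next
  case (insert x S)
  then obtain w where w: "w \<in> G" "\<forall>y\<in>S. \<exists>n::int. y = of_int n * w" by blast
  have x: "x \<in> G" using insert.prems by blast
  show ?case
  proof (cases "w = 0")
    case True
    have "y = of_int (if y = x then 1 else 0) * x" if "y \<in> insert x S" for y
      using that w(2) True by auto
    then show ?thesis using x by blast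
  next
    case False
    obtain w' p q where w': "w' \<in> G" "x = of_int p * w'" "w = of_int q * w'"
      using add_subgroup_Rats_common_generator[OF G x w(1) False] by blast
    have "\<exists>n::int. y = of_int n * w'" if "y \<in> insert x S" for y
    proof (cases "y = x")
      case True
      then show ?thesis using w'(2) by blast
    next
      case False
      then have "y \<in> S" using that by simp
      then obtain n :: int where "y = of_int n * w" using w(2) by blast
      then have "y = of_int (n * q) * w'" using w'(3) by (simp add: mult.assoc)
      then show ?thesis by blast
    qed
    then show ?thesis using w'(1) by blast
  qed
qed

lemma index_at_most_Rats:
  fixes G :: "'a :: field_char_0 set"
  assumes G: "add_subgroup G" "G \<subseteq> \<rat>" and m: "m > 0"
  shows "index_at_most G ((*) (of_nat m) ` G) m"
  unfolding index_at_most_def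
proof (intro allI impI)
  fix S assume S: "S \<subseteq> G" "finite S"
    and incongruent: "\<forall>x\<in>S. \<forall>y\<in>S. x - y \<in> (*) (of_nat m) ` G \<longrightarrow> x = y"
  obtain w where w: "w \<in> G" "\<forall>x\<in>S. \<exists>n::int. x = of_int n * w"
    using add_subgroup_Rats_finite_subset_cyclic[OF G S(2,1)] by blast
  then obtain n where n: "\<And>x. x \<in> S \<Longrightarrow> x = of_int (n x) * w" by metis
  have "inj_on (\<lambda>x. n x mod int m) S"
  proof (rule inj_onI)
    fix x y assume xy: "x \<in> S" "y \<in> S" "n x mod int m = n y mod int m"
    then obtain k where k: "n x - n y = int m * k" by (metis dvdE mod_eq_dvd_iff)
    have "x - y = of_int (n x - n y) * w"
      using n[OF xy(1)] n[OF xy(2)] by (metis left_diff_distrib of_int_diff)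
    also have "\<dots> = of_nat m * (of_int k * w)" by (simp add: k)
    finally have "x - y = of_nat m * (of_int k * w)" .
    moreover have "of_int k * w \<in> G" by (rule add_subgroup_of_int_mult[OF G(1) w(1)])
    ultimately show "x = y" using incongruent xy(1,2) by blast
  qed
  then have "card S = card ((\<lambda>x. n x mod int m) ` S)" by (rule card_image[symmetric])
  also have "\<dots> \<le> card {0..<int m}" by (rule card_mono) (use m in auto)
  finally show "card S \<le> m" by simp
qed

lemma finite_transversal:
  assumes "finite S" and refl: "\<And>x. x \<in> S \<Longrightarrow> R x x"
    and sym: "\<And>x y. x \<in> S \<Longrightarrow> y \<in> S \<Longrightarrow> R x y \<Longrightarrow> R y x"
  obtains T where "T \<subseteq> S" "\<forall>x\<in>S. \<exists>t\<in>T. R x t" "\<forall>t\<in>T. \<forall>t'\<in>T. R t t' \<longrightarrow> t = t'"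
proof -
  have "\<exists>T\<subseteq>S'. (\<forall>x\<in>S'. \<exists>t\<in>T. R x t) \<and> (\<forall>t\<in>T. \<forall>t'\<in>T. R t t' \<longrightarrow> t = t')" if "S' \<subseteq> S" for S'
    using finite_subset[OF that assms(1)] that
  proof (induction S' rule: finite_induct)
    case (insert x S')
    then obtain T where T: "T \<subseteq> S'" "\<forall>y\<in>S'. \<exists>t\<in>T. R y t" "\<forall>t\<in>T. \<forall>t'\<in>T. R t t' \<longrightarrow> t = t'"
      by blast
    show ?case
    proof (cases "\<exists>t\<in>T. R x t")
      case True
      then show ?thesis using T by blast
    next
      case False
      have "\<not> R t x" if "t \<in> T" for t
        using False sym[of t x] that T(1) insert.prems by blast
      moreover have "R x x" using refl insert.prems by blast
      ultimately show ?thesis using T False by (intro exI[of _ "insert x T"]) blast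
    qed
  qed simp
  from this[OF subset_refl] show ?thesis using that by blast
qed

lemma card_fibre_le_index_kernel:
  fixes P :: "'a :: comm_ring_1 \<Rightarrow> 'b :: comm_ring_1"
  assumes G: "add_subgroup G"
    and P: "\<And>x y. x \<in> G \<Longrightarrow> y \<in> G \<Longrightarrow> P (x - y) = P x - P y"
    and kernel: "index_at_most {x \<in> G. P x = 0} ((*) (of_nat m) ` {x \<in> G. P x = 0}) a"
    and S: "S \<subseteq> G" "finite S" and t: "t \<in> S"
    and incongruent: "\<And>x y. x \<in> S \<Longrightarrow> y \<in> S \<Longrightarrow> x - y \<in> (*) (of_nat m) ` G \<Longrightarrow> x = y"
  shows "card {x \<in> S. P x - P t \<in> (*) (of_nat m) ` P ` G} \<le> a"
proof -
  define F where "F = {x \<in> S. P x - P t \<in> (*) (of_nat m) ` P ` G}"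
  have "\<forall>x\<in>F. \<exists>g\<in>G. P x - P t = of_nat m * P g" unfolding F_def by blast
  then obtain g where g: "\<And>x. x \<in> F \<Longrightarrow> g x \<in> G"
    and Pg: "\<And>x. x \<in> F \<Longrightarrow> P x - P t = of_nat m * P (g x)" by metis
  have xtG: "x - t \<in> G" if "x \<in> F" for x
    using that t S(1) unfolding F_def by (blast intro: add_subgroup_diff[OF G])
  have mgG: "of_nat m * g x \<in> G" if "x \<in> F" for x
    using add_subgroup_of_int_mult[OF G g[OF that], of "int m"] by simp
  define f where "f x = x - t - of_nat m * g x" for x
  have "f x \<in> {x \<in> G. P x = 0}" if x: "x \<in> F" for x
  proof (intro CollectI conjI)
    show "f x \<in> G" unfolding f_def by (rule add_subgroup_diff[OF G xtG[OF x] mgG[OF x]])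
    have "P (f x) = P (x - t) - P (of_nat m * g x)"
      unfolding f_def by (rule P[OF xtG[OF x] mgG[OF x]])
    also have "\<dots> = 0"
      using P[of x t] x t S(1) Pg[OF x] additive_of_nat_mult[OF G P g[OF x]]
      unfolding F_def by auto
    finally show "P (f x) = 0" .
  qed
  then have f_kernel: "f ` F \<subseteq> {x \<in> G. P x = 0}" by blast
  have f_incongruent: "x = y"
    if xy: "x \<in> F" "y \<in> F" and d: "f x - f y \<in> (*) (of_nat m) ` {x \<in> G. P x = 0}" for x y
  proof -
    obtain z where z: "z \<in> G" "f x - f y = of_nat m * z" using d by blast
    then have "x - y = of_nat m * (z + (g x - g y))" unfolding f_def by (simp add: algebra_simps)
    moreover have "z + (g x - g y) \<in> G"
      using z(1) g xy by (blast intro: add_subgroup_add[OF G] add_subgroup_diff[OF G])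
    ultimately show "x = y" using incongruent xy unfolding F_def by blast
  qed
  have "0 \<in> (*) (of_nat m) ` {x \<in> G. P x = 0}"
    using add_subgroup_zero[OF G] P[OF t[THEN subsetD[OF S(1)]] t[THEN subsetD[OF S(1)]]] by force
  moreover have "finite F" using S(2) unfolding F_def by simp
  ultimately show ?thesis
    unfolding F_def[symmetric] using index_at_most_card_le[OF kernel _ _ f_kernel f_incongruent] by blast
qed

lemma index_at_most_extension:
  fixes P :: "'a :: comm_ring_1 \<Rightarrow> 'b :: comm_ring_1"
  assumes G: "add_subgroup G"
    and P: "\<And>x y. x \<in> G \<Longrightarrow> y \<in> G \<Longrightarrow> P (x - y) = P x - P y"
    and kernel: "index_at_most {x \<in> G. P x = 0} ((*) (of_nat m) ` {x \<in> G. P x = 0}) a"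
    and image: "index_at_most (P ` G) ((*) (of_nat m) ` P ` G) b"
  shows "index_at_most G ((*) (of_nat m) ` G) (a * b)"
  unfolding index_at_most_def
proof (intro allI impI)
  fix S assume S: "S \<subseteq> G" "finite S"
    and incongruent: "\<forall>x\<in>S. \<forall>y\<in>S. x - y \<in> (*) (of_nat m) ` G \<longrightarrow> x = y"
  define rel where "rel x y \<longleftrightarrow> P x - P y \<in> (*) (of_nat m) ` P ` G" for x y
  have zero: "0 \<in> (*) (of_nat m) ` P ` G"
    using add_subgroup_zero[OF G] P[of 0 0] by force
  have rel_refl: "rel x x" if "x \<in> S" for x
    using zero unfolding rel_def by simp
  have rel_sym: "rel y x" if "x \<in> S" "y \<in> S" "rel x y" for x y
  proof -
    obtain z where "z \<in> P ` G" "P x - P y = of_nat m * z" using \<open>rel x y\<close> unfolding rel_def by blast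
    then show ?thesis
      using add_subgroup_uminus[OF add_subgroup_image[OF G P]] unfolding rel_def
      by (intro image_eqI[of _ _ "- z"]) (auto simp: algebra_simps)
  qed
  obtain T where T: "T \<subseteq> S" "\<forall>x\<in>S. \<exists>t\<in>T. rel x t"
    and T_distinct: "\<forall>t\<in>T. \<forall>t'\<in>T. rel t t' \<longrightarrow> t = t'"
    by (rule finite_transversal[OF S(2) rel_refl rel_sym])
  have "card T \<le> b"
  proof (rule index_at_most_card_le[OF image zero])
    show "finite T" using T(1) S(2) by (rule finite_subset)
    show "P ` T \<subseteq> P ` G" using T(1) S(1) by blast
    show "t = t'" if "t \<in> T" "t' \<in> T" "P t - P t' \<in> (*) (of_nat m) ` P ` G" for t t'
      using T_distinct that unfolding rel_def by blast
  qed
  have "S = (\<Union>t\<in>T. {x \<in> S. rel x t})"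
    using T(2) by blast
  then have "card S = card (\<Union>t\<in>T. {x \<in> S. rel x t})" by simp
  also have "\<dots> \<le> (\<Sum>t\<in>T. card {x \<in> S. rel x t})"
    by (rule card_UN_le) (use T(1) S(2) finite_subset in blast)
  also have "\<dots> \<le> (\<Sum>t\<in>T. a)"
    using card_fibre_le_index_kernel[OF G P kernel S] incongruent T(1)
    unfolding rel_def by (intro sum_mono) blast
  also have "\<dots> \<le> a * b"
    using \<open>card T \<le> b\<close> by simp
  finally show "card S \<le> a * b" .
qed

definition rat_span :: "'a :: field_char_0 list \<Rightarrow> 'a set" where
  "rat_span vs = {(\<Sum>i<length vs. of_rat (q i) * vs ! i) | q. True}"

lemma rat_span_Nil: "rat_span [] = {0}"
  unfolding rat_span_def by simp

lemma rat_span_Cons: "rat_span (v # ws) = {of_rat a * v + w | a w. w \<in> rat_span ws}"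
proof (intro equalityI subsetI)
  fix z assume "z \<in> rat_span (v # ws)"
  then obtain q where "z = (\<Sum>i<length (v # ws). of_rat (q i) * (v # ws) ! i)"
    unfolding rat_span_def by blast
  then have "z = of_rat (q 0) * v + (\<Sum>i<length ws. of_rat ((q \<circ> Suc) i) * ws ! i)"
    by (simp add: sum.lessThan_Suc_shift del: sum.lessThan_Suc)
  then show "z \<in> {of_rat a * v + w | a w. w \<in> rat_span ws}"
    unfolding rat_span_def by blast
next
  fix z assume "z \<in> {of_rat a * v + w | a w. w \<in> rat_span ws}"
  then obtain a q where "z = of_rat a * v + (\<Sum>i<length ws. of_rat (q i) * ws ! i)"
    unfolding rat_span_def by blast
  then have "z = (\<Sum>i<length (v # ws). of_rat (case_nat a q i) * (v # ws) ! i)"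
    by (simp add: sum.lessThan_Suc_shift del: sum.lessThan_Suc)
  then show "z \<in> rat_span (v # ws)"
    unfolding rat_span_def by blast
qed

lemma rat_span_diff: "x \<in> rat_span vs \<Longrightarrow> y \<in> rat_span vs \<Longrightarrow> x - y \<in> rat_span vs"
proof (induction vs arbitrary: x y)
  case (Cons v ws)
  then obtain a b w w' where "x = of_rat a * v + w" "y = of_rat b * v + w'"
    and w: "w \<in> rat_span ws" "w' \<in> rat_span ws"
    unfolding rat_span_Cons by blast
  then have "x - y = of_rat (a - b) * v + (w - w')"
    by (simp add: of_rat_diff algebra_simps)
  then show ?case using Cons.IH[OF w] unfolding rat_span_Cons by blast
qed (simp add: rat_span_Nil)

lemma rat_span_of_rat_mult: "x \<in> rat_span vs \<Longrightarrow> of_rat c * x \<in> rat_span vs"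
proof (induction vs arbitrary: x)
  case (Cons v ws)
  then obtain a w where "x = of_rat a * v + w" and w: "w \<in> rat_span ws"
    unfolding rat_span_Cons by blast
  then have "of_rat c * x = of_rat (c * a) * v + of_rat c * w"
    by (simp add: of_rat_mult algebra_simps)
  then show ?case using Cons.IH[OF w] unfolding rat_span_Cons by blast
qed (simp add: rat_span_Nil)

lemma add_subgroup_rat_span: "add_subgroup (rat_span vs)"
proof -
  have "0 \<in> rat_span vs"
    unfolding rat_span_def by (auto intro!: exI[of _ "\<lambda>_. 0"])
  then show ?thesis unfolding add_subgroup_def using rat_span_diff by blast
qed

lemma rat_span_Cons_coefficient_unique:
  assumes v: "v \<notin> rat_span ws" and w: "w \<in> rat_span ws" "w' \<in> rat_span ws"
    and eq: "of_rat a * v + w = of_rat b * v + w'"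
  shows "a = b"
proof (rule ccontr)
  assume "a \<noteq> b"
  have "of_rat (a - b) * v = w' - w" using eq by (simp add: of_rat_diff algebra_simps)
  moreover have "v = inverse (of_rat (a - b)) * (of_rat (a - b) * v)"
    using \<open>a \<noteq> b\<close> by simp
  ultimately have "v = of_rat (inverse (a - b)) * (w' - w)"
    by (simp add: of_rat_inverse)
  then show False using v rat_span_of_rat_mult rat_span_diff w by metis
qed

lemma rat_span_Cons_coordinate:
  fixes v :: "'a :: field_char_0"
  assumes v: "v \<notin> rat_span ws"
  obtains P :: "'a \<Rightarrow> 'a"
  where "\<And>x y. x \<in> rat_span (v # ws) \<Longrightarrow> y \<in> rat_span (v # ws) \<Longrightarrow> P (x - y) = P x - P y"
    and "\<And>x. x \<in> rat_span (v # ws) \<Longrightarrow> P x = 0 \<Longrightarrow> x \<in> rat_span ws"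
    and "range P \<subseteq> \<rat>"
proof -
  define c where "c z = (THE a. \<exists>w\<in>rat_span ws. z = of_rat a * v + w)" for z
  have c: "c (of_rat a * v + w) = a" if "w \<in> rat_span ws" for a w
    unfolding c_def using that rat_span_Cons_coefficient_unique[OF v]
    by (intro the_equality) blast+
  define P where "P z = (of_rat (c z) :: 'a)" for z
  show ?thesis
  proof (rule that)
    fix x y assume "x \<in> rat_span (v # ws)" "y \<in> rat_span (v # ws)"
    then obtain a b w w' where x: "x = of_rat a * v + w" and y: "y = of_rat b * v + w'"
      and w: "w \<in> rat_span ws" "w' \<in> rat_span ws"
      unfolding rat_span_Cons by blast
    have "x - y = of_rat (a - b) * v + (w - w')"
      unfolding x y by (simp add: of_rat_diff algebra_simps)
    then have "P (x - y) = of_rat (a - b)"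
      unfolding P_def using c[OF rat_span_diff[OF w]] by simp
    moreover have "P x = of_rat a" "P y = of_rat b"
      unfolding P_def x y using c w by simp_all
    ultimately show "P (x - y) = P x - P y" by (simp add: of_rat_diff)
  next
    fix x assume "x \<in> rat_span (v # ws)" "P x = 0"
    then obtain a w where "w \<in> rat_span ws" "x = of_rat a * v + w" "P x = 0"
      unfolding rat_span_Cons by blast
    then show "x \<in> rat_span ws" unfolding P_def using c by simp
  next
    show "range P \<subseteq> \<rat>" unfolding P_def by auto
  qed
qed

lemma index_at_most_rat_span:
  fixes G :: "'a :: field_char_0 set"
  assumes m: "m > 0"
  shows "add_subgroup G \<Longrightarrow> G \<subseteq> rat_span vs \<Longrightarrow>
    index_at_most G ((*) (of_nat m) ` G) (m ^ length vs)"
proof (induction vs arbitrary: G)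
  case Nil
  then have "card S \<le> 1" if "S \<subseteq> G" for S
    using that card_mono[of "{0}" S] by (auto simp: rat_span_Nil)
  then show ?case unfolding index_at_most_def by simp
next
  case (Cons v ws)
  note G = Cons.prems(1)
  show ?case
  proof (cases "v \<in> rat_span ws")
    case True
    have "rat_span (v # ws) \<subseteq> rat_span ws"
      using True add_subgroup_add[OF add_subgroup_rat_span] rat_span_of_rat_mult
      unfolding rat_span_Cons by blast
    then have "index_at_most G ((*) (of_nat m) ` G) (m ^ length ws)"
      using Cons by blast
    then show ?thesis by (rule index_at_most_mono) (use m in simp_all)
  next
    case False
    obtain P :: "'a \<Rightarrow> 'a"
      where P: "\<And>x y. x \<in> rat_span (v # ws) \<Longrightarrow> y \<in> rat_span (v # ws) \<Longrightarrow> P (x - y) = P x - P y"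
        and kernel: "\<And>x. x \<in> rat_span (v # ws) \<Longrightarrow> P x = 0 \<Longrightarrow> x \<in> rat_span ws"
        and image: "range P \<subseteq> \<rat>"
      using rat_span_Cons_coordinate[OF False] by blast
    have P_G: "P (x - y) = P x - P y" if "x \<in> G" "y \<in> G" for x y
      using P that Cons.prems(2) by blast
    have kernel_index:
      "index_at_most {x \<in> G. P x = 0} ((*) (of_nat m) ` {x \<in> G. P x = 0}) (m ^ length ws)"
      using Cons.IH[OF add_subgroup_kernel[OF G P_G]] kernel Cons.prems(2) by blast
    have image_index: "index_at_most (P ` G) ((*) (of_nat m) ` P ` G) m"
      using index_at_most_Rats[OF add_subgroup_image[OF G P_G] _ m] image by blast
    have "index_at_most G ((*) (of_nat m) ` G) (m ^ length ws * m)"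
      using index_at_most_extension[OF G P_G kernel_index image_index] .
    then show ?thesis by (simp only: length_Cons power_Suc2)
  qed
qed

section \<open>Ideals of the ring of integers\<close>

lemma subfield_of_complex_of_int:
  assumes K: "subfield_of_complex K"
  shows "of_int k \<in> K"
proof -
  have nat: "of_nat n \<in> K" for n
    using K unfolding subfield_of_complex_def by (induction n) auto
  have "(of_int k :: complex) = of_nat (nat k) - of_nat (nat (- k))"
    by (cases "k \<ge> 0") (simp_all add: of_nat_nat)
  then show ?thesis using K nat unfolding subfield_of_complex_def by metis
qed

lemma ring_of_integers_of_int: "subfield_of_complex K \<Longrightarrow> of_int k \<in> ring_of_integers K"
  unfolding ring_of_integers_def algebraic_integer_iff_algebraic_int
  using subfield_of_complex_of_int by blast

lemma ring_of_integers_add: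
  "subfield_of_complex K \<Longrightarrow> x \<in> ring_of_integers K \<Longrightarrow> y \<in> ring_of_integers K \<Longrightarrow>
    x + y \<in> ring_of_integers K"
  unfolding ring_of_integers_def subfield_of_complex_def algebraic_integer_iff_algebraic_int
  using algebraic_int_add by blast

lemma ring_of_integers_mult:
  "subfield_of_complex K \<Longrightarrow> x \<in> ring_of_integers K \<Longrightarrow> y \<in> ring_of_integers K \<Longrightarrow>
    x * y \<in> ring_of_integers K"
  unfolding ring_of_integers_def subfield_of_complex_def algebraic_integer_iff_algebraic_int
  using algebraic_int_mult by blast

lemma ring_of_integers_diff:
  "subfield_of_complex K \<Longrightarrow> x \<in> ring_of_integers K \<Longrightarrow> y \<in> ring_of_integers K \<Longrightarrow>
    x - y \<in> ring_of_integers K"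
  unfolding ring_of_integers_def subfield_of_complex_def algebraic_integer_iff_algebraic_int
  using algebraic_int_add[of x "- y"] by auto

lemma add_subgroup_ring_of_integers:
  "subfield_of_complex K \<Longrightarrow> add_subgroup (ring_of_integers K)"
  unfolding add_subgroup_def using ring_of_integers_diff ring_of_integers_of_int[of K 0] by auto

lemma ring_of_integers_poly_of_int:
  assumes K: "subfield_of_complex K" and a: "a \<in> ring_of_integers K"
  shows "poly (map_poly of_int p) a \<in> ring_of_integers K"
proof (induction p)
  case 0
  show ?case using ring_of_integers_of_int[OF K, of 0] by simp
next
  case (pCons c q)
  then show ?case
    using ring_of_integers_add[OF K ring_of_integers_of_int[OF K] ring_of_integers_mult[OF K a]]
    by (simp add: map_poly_pCons)
qed

lemma add_subgroup_nonzero_integral_ideal: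
  assumes K: "subfield_of_complex K" and I: "nonzero_integral_ideal K I"
  shows "add_subgroup I"
proof -
  have "- x \<in> I" if "x \<in> I" for x
    using I ring_of_integers_of_int[OF K, of "-1"] that
    unfolding nonzero_integral_ideal_def by force
  then show ?thesis
    using I unfolding nonzero_integral_ideal_def add_subgroup_def by (metis diff_conv_add_uminus)
qed

lemma nonzero_integral_ideal_contains_positive_integer:
  assumes K: "subfield_of_complex K" and I: "nonzero_integral_ideal K I"
  obtains m :: nat where "m > 0" "of_nat m \<in> I"
proof -
  obtain a where a: "a \<in> I" "a \<noteq> 0" and aO: "a \<in> ring_of_integers K"
    using I unfolding nonzero_integral_ideal_def by blast
  then have "algebraic_int a"
    unfolding ring_of_integers_def algebraic_integer_iff_algebraic_int by blast
  then obtain p :: "int poly"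
    where p: "poly (map_poly of_int p) a = 0" "coeff p 0 \<noteq> 0"
    using algebraic_int_monic_poly_nonzero_const a(2) by metis
  obtain c q where pq: "p = pCons c q" by (rule pCons_cases)
  with p have c: "c \<noteq> 0" and "of_int c + a * poly (map_poly of_int q) a = 0"
    by (simp_all add: map_poly_pCons)
  then have "of_int c = - (a * poly (map_poly of_int q) a)"
    by (simp add: eq_neg_iff_add_eq_0)
  also have "\<dots> = (- poly (map_poly of_int q) a) * a"
    by simp
  also have "\<dots> \<in> I"
  proof -
    have "- poly (map_poly of_int q) a \<in> ring_of_integers K"
      using ring_of_integers_diff[OF K ring_of_integers_of_int[OF K, of 0]
          ring_of_integers_poly_of_int[OF K aO, of q]] by simp
    then show ?thesis using I a(1) unfolding nonzero_integral_ideal_def by blast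
  qed
  finally have "of_int c \<in> I" .
  then have "of_nat (nat \<bar>c\<bar>) \<in> I"
    using add_subgroup_uminus[OF add_subgroup_nonzero_integral_ideal[OF K I]]
    by (cases "c \<ge> 0") simp_all
  then show ?thesis by (rule that[rotated]) (use c in simp)
qed

lemma finite_cosets_nonzero_integral_ideal:
  assumes NF: "number_field K" and I: "nonzero_integral_ideal K I"
  shows "finite {(+) x ` I | x. x \<in> ring_of_integers K}"
proof -
  let ?O = "ring_of_integers K"
  have K: "subfield_of_complex K" using NF unfolding number_field_def by blast
  obtain bs where "K \<subseteq> rat_span bs"
    using NF unfolding number_field_def rat_span_def by blast
  then have O: "?O \<subseteq> rat_span bs" unfolding ring_of_integers_def by blast
  obtain m :: nat where m: "m > 0" "of_nat m \<in> I"
    using nonzero_integral_ideal_contains_positive_integer[OF K I] by blast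
  have "(*) (of_nat m) ` ?O \<subseteq> I"
    using I m(2) unfolding nonzero_integral_ideal_def by (auto simp: mult.commute)
  then have "index_at_most ?O I (m ^ length bs)"
    by (rule index_at_most_mono[OF index_at_most_rat_span[OF m(1) add_subgroup_ring_of_integers[OF K] O]])
      simp
  then show ?thesis
    by (rule finite_cosets_if_index_at_most[OF add_subgroup_nonzero_integral_ideal[OF K I]])
qed

lemma nonzero_integral_ideal_scale:
  assumes I: "nonzero_integral_ideal K I" and c: "c \<noteq> 0"
    and sub: "(*) c ` I \<subseteq> ring_of_integers K"
  shows "nonzero_integral_ideal K ((*) c ` I)"
  unfolding nonzero_integral_ideal_def
proof (intro conjI ballI sub)
  obtain w where w: "w \<in> I" "w \<noteq> 0" and "0 \<in> I"
    using I unfolding nonzero_integral_ideal_def by blast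
  show "0 \<in> (*) c ` I" using \<open>0 \<in> I\<close> by (rule rev_image_eqI) simp
  have "c * w \<in> (*) c ` I" "c * w \<noteq> 0" using w c by simp_all
  then show "(*) c ` I \<noteq> {0}" by blast
next
  fix x y assume "x \<in> (*) c ` I" "y \<in> (*) c ` I"
  then obtain u w where "u \<in> I" "w \<in> I" "x = c * u" "y = c * w" by blast
  moreover have "u + w \<in> I"
    using I \<open>u \<in> I\<close> \<open>w \<in> I\<close> unfolding nonzero_integral_ideal_def by blast
  ultimately show "x + y \<in> (*) c ` I" by (simp add: rev_image_eqI distrib_left)
next
  fix r x assume "r \<in> ring_of_integers K" "x \<in> (*) c ` I"
  then obtain u where "u \<in> I" "x = c * u" by blast
  moreover have "r * u \<in> I"
    using I \<open>r \<in> ring_of_integers K\<close> \<open>u \<in> I\<close> unfolding nonzero_integral_ideal_def by blast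
  ultimately show "r * x \<in> (*) c ` I" by (simp add: rev_image_eqI mult.left_commute)
qed

lemma nonzero_integral_ideal_divide_principal:
  assumes K: "subfield_of_complex K" and g: "nonzero_integral_ideal K g"
    and \<alpha>: "\<alpha> \<in> ring_of_integers K" "g \<subseteq> principal_ideal K \<alpha>"
  obtains J where "nonzero_integral_ideal K J" "same_ideal_class K J g" "g = (*) \<alpha> ` J" "\<alpha> \<noteq> 0"
proof -
  have "\<alpha> \<noteq> 0"
    using g \<alpha>(2) unfolding nonzero_integral_ideal_def principal_ideal_def by auto
  define J where "J = (*) (inverse \<alpha>) ` g"
  have "J \<subseteq> ring_of_integers K"
  proof
    fix z assume "z \<in> J"
    then obtain w where "w \<in> g" "z = inverse \<alpha> * w" unfolding J_def by blast
    moreover obtain u where "u \<in> ring_of_integers K" "w = \<alpha> * u"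
      using \<alpha>(2) \<open>w \<in> g\<close> unfolding principal_ideal_def by blast
    ultimately show "z \<in> ring_of_integers K"
      using \<open>\<alpha> \<noteq> 0\<close> by (simp add: mult.assoc[symmetric])
  qed
  then have "nonzero_integral_ideal K J"
    unfolding J_def using nonzero_integral_ideal_scale[OF g] \<open>\<alpha> \<noteq> 0\<close> by simp
  moreover have "inverse \<alpha> \<in> K"
    using K \<alpha>(1) \<open>\<alpha> \<noteq> 0\<close> unfolding subfield_of_complex_def ring_of_integers_def by blast
  then have "same_ideal_class K J g"
    unfolding same_ideal_class_def J_def using \<open>\<alpha> \<noteq> 0\<close>
    by (intro bexI[of _ "inverse \<alpha>"]) simp_all
  moreover have "g = (*) \<alpha> ` J"
    unfolding J_def image_comp using \<open>\<alpha> \<noteq> 0\<close> by (simp add: comp_def mult.assoc[symmetric])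
  ultimately show ?thesis using that \<open>\<alpha> \<noteq> 0\<close> by blast
qed

lemma abs_norm_eq_card_scaled_cosets:
  assumes "\<alpha> \<noteq> 0"
  shows "abs_norm K J = card {(+) (\<alpha> * x) ` ((*) \<alpha> ` J) | x. x \<in> ring_of_integers K}"
proof -
  have "inj ((`) ((*) \<alpha>))"
    using assms by (intro inj_onI) (simp add: inj_image_eq_iff inj_on_def)
  then have "abs_norm K J = card ((`) ((*) \<alpha>) ` {(+) x ` J | x. x \<in> ring_of_integers K})"
    unfolding abs_norm_def by (simp add: card_image inj_on_subset)
  also have "(`) ((*) \<alpha>) ` {(+) x ` J | x. x \<in> ring_of_integers K}
      = {(+) (\<alpha> * x) ` ((*) \<alpha> ` J) | x. x \<in> ring_of_integers K}"
  proof -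
    have "(*) \<alpha> ` ((+) x ` J) = (+) (\<alpha> * x) ` ((*) \<alpha> ` J)" for x
      unfolding image_comp by (simp add: comp_def distrib_left)
    then show ?thesis by blast
  qed
  finally show ?thesis .
qed

lemma abs_norm_less_mult_nonunit:
  assumes NF: "number_field K" and J: "nonzero_integral_ideal K J"
    and \<alpha>: "\<alpha> \<in> ring_of_integers K" "\<alpha> \<noteq> 0"
    and nonunit: "principal_ideal K \<alpha> \<noteq> ring_of_integers K"
  shows "abs_norm K J < abs_norm K ((*) \<alpha> ` J)"
proof -
  let ?O = "ring_of_integers K" and ?g = "(*) \<alpha> ` J"
  have K: "subfield_of_complex K" using NF unfolding number_field_def by blast
  have J_sub: "J \<subseteq> ?O" using J unfolding nonzero_integral_ideal_def by blast
  have "?g \<subseteq> ?O" using J_sub ring_of_integers_mult[OF K \<alpha>(1)] by blast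
  then have g_ideal: "nonzero_integral_ideal K ?g"
    by (rule nonzero_integral_ideal_scale[OF J \<alpha>(2)])
  have g: "add_subgroup ?g" by (rule add_subgroup_nonzero_integral_ideal[OF K g_ideal])
  define cosets where "cosets = {(+) x ` ?g | x. x \<in> ?O}"
  define scaled_cosets where "scaled_cosets = {(+) (\<alpha> * x) ` ?g | x. x \<in> ?O}"
  have "principal_ideal K \<alpha> \<subseteq> ?O"
    unfolding principal_ideal_def using ring_of_integers_mult[OF K \<alpha>(1)] by blast
  then obtain y where y: "y \<in> ?O" "y \<notin> principal_ideal K \<alpha>" using nonunit by blast
  have "abs_norm K J = card scaled_cosets"
    unfolding scaled_cosets_def by (rule abs_norm_eq_card_scaled_cosets[OF \<alpha>(2)])
  also have "card scaled_cosets < card cosets"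
  proof (rule psubset_card_mono)
    show "finite cosets"
      unfolding cosets_def by (rule finite_cosets_nonzero_integral_ideal[OF NF g_ideal])
    have "(+) y ` ?g \<noteq> (+) (\<alpha> * x) ` ?g" if "x \<in> ?O" for x
    proof
      assume "(+) y ` ?g = (+) (\<alpha> * x) ` ?g"
      then have "y - \<alpha> * x \<in> ?g" by (simp only: add_coset_eq_iff[OF g])
      then obtain u where "u \<in> J" "y - \<alpha> * x = \<alpha> * u" by blast
      then have "y = \<alpha> * (x + u)" by (simp add: algebra_simps)
      moreover have "x + u \<in> ?O"
        using ring_of_integers_add[OF K that subsetD[OF J_sub \<open>u \<in> J\<close>]] .
      ultimately show False using y(2) unfolding principal_ideal_def by blast
    qed
    then have "(+) y ` ?g \<notin> scaled_cosets" unfolding scaled_cosets_def by blast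
    moreover have "(+) y ` ?g \<in> cosets" unfolding cosets_def using y(1) by blast
    moreover have "scaled_cosets \<subseteq> cosets"
      unfolding scaled_cosets_def cosets_def using ring_of_integers_mult[OF K \<alpha>(1)] by blast
    ultimately show "scaled_cosets \<subset> cosets" by blast
  qed
  finally show ?thesis unfolding abs_norm_def cosets_def .
qed

theorem proposition3p2:
  fixes K :: "complex set" and R :: "complex set set"
  assumes "number_field K"
    and "class_group_representatives K R"
    and "\<forall>g\<in>R. \<forall>I. nonzero_integral_ideal K I \<and> same_ideal_class K I g
            \<longrightarrow> abs_norm K g \<le> abs_norm K I"
  shows "\<forall>g\<in>R. inseverable K g"
proof
  fix g assume "g \<in> R"
  have K: "subfield_of_complex K" using assms(1) unfolding number_field_def by blast
  have g: "nonzero_integral_ideal K g"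
    using assms(2) \<open>g \<in> R\<close> unfolding class_group_representatives_def by blast
  show "inseverable K g"
    unfolding inseverable_def
  proof (intro conjI ballI impI g, rule ccontr)
    fix \<alpha> assume \<alpha>: "\<alpha> \<in> ring_of_integers K" "g \<subseteq> principal_ideal K \<alpha>"
      and nonunit: "principal_ideal K \<alpha> \<noteq> ring_of_integers K"
    obtain J where J: "nonzero_integral_ideal K J" "same_ideal_class K J g"
      and g_eq: "g = (*) \<alpha> ` J" and "\<alpha> \<noteq> 0"
      using nonzero_integral_ideal_divide_principal[OF K g \<alpha>] by blast
    have "abs_norm K g \<le> abs_norm K J" using assms(3) \<open>g \<in> R\<close> J by blast
    moreover have "abs_norm K J < abs_norm K g"
      unfolding g_eq by (rule abs_norm_less_mult_nonunit[OF assms(1) J(1) \<alpha>(1) \<open>\<alpha> \<noteq> 0\<close> nonunit])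
    ultimately show False by simp
  qed
qed

end
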